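(* Let $\succcurlyeq$ be a preference relation on the set $\mathcal{B}$ of bets over a propositional language $\mathcal{L}$ satisfying Non-Triviality, Objective Expected Utility and Inclusion/Exclusion. Let $\mathcal{T}$ be a theory and let $\mathcal{S}\subseteq\mathcal{T}$ be the unique largest sub-theory such that $\succcurlyeq$ satisfies $\mathcal{S}$-Implication (i.e. $\succcurlyeq$ satisfies $\mathcal{S}$-Implication and fails $\mathcal{S}'$-Implication for every $\mathcal{S}\subsetneq\mathcal{S}'\subseteq\mathcal{T}$). Then $\mathcal{S}=\{\phi\in\mathcal{T}\mid b_\phi\succcurlyeq b_{\mathbf{T}}\}$.
   Context: Let $\mathbb{P}$ be a set of propositional variables containing distinguished $\mathbf{T}$, $\mathbf{F}$, and $\mathcal{L}$ the language generated by $\neg,\land,\lor$; $\phi\implies\psi$ means $\psi$ is deducible from $\phi$ in classical propositional logic. A theory is a set $\mathcal{T}\subseteq\mathcal{L}$ closed under logical implication with $\mathbf{F}\notin\mathcal{T}$. For a set $\mathcal{S}$ of statements, $\phi\overset{\mathcal{S}}{\implies}\psi$ means $\psi$ is deducible from $\phi$ together with the elements of $\mathcal{S}$. A bet is a finitely supported $b:\mathcal{L}\to[0,1]$ summing to $1$; $b_\phi$ is the point-mass bet on $\phi$; the set $\mathcal{B}$ of bets is a mixture space under pointwise mixtures, and $\{\alpha_1 b_{\phi_1},\dots,\alpha_k b_{\phi_k}\}$ denotes the bet assigning weight $\alpha_i$ to $\phi_i$ (weights on coinciding statements added). Non-Triviality: $b_{\mathbf{T}}\succcurlyeq b_\phi\succcurlyeq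 b_{\mathbf{F}}$ for all $\phi$ and $b_{\mathbf{T}}\succ b_{\mathbf{F}}$. Objective Expected Utility: $\succcurlyeq$ is complete, transitive, Archimedean and satisfies Independence. $\mathcal{S}$-Implication: $\phi\overset{\mathcal{S}}{\implies}\psi$ implies $b_\psi\succcurlyeq b_\phi$. Inclusion/Exclusion: for any $\phi_1,\dots,\phi_n\in\mathcal{L}$ and $\psi$ with $\phi_i\implies\psi$ for all $i$, letting $E$ and $O$ be the collections of nonempty subsets of $\{1,\dots,n\}$ of even and odd cardinality respectively, $\phi_I=\bigwedge_{i\in I}\phi_i$, and $m=\max\{|E|+1,|O|\}$, we have $\{\tfrac1m b_\psi,\ \tfrac1m b_{\phi_I}\ (I\in E),\ (1-\tfrac{|E|+1}{m})b_{\mathbf{F}}\}\succcurlyeq\{\tfrac1m b_{\phi_I}\ (I\in O),\ (1-\tfrac{|O|}{m})b_{\mathbf{F}}\}$. *)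

theory Defs
  imports Main Complex_Main
begin

text \<open>Formulas over propositional variables of type 'p, with the distinguished
  variables T and F rendered as the constructors TT and FF.\<close>
datatype 'p form = Var 'p | TT | FF | Neg "'p form" | Conj "'p form" "'p form" | Disj "'p form" "'p form"

fun holds :: "('p \<Rightarrow> bool) \<Rightarrow> 'p form \<Rightarrow> bool" where
  "holds v (Var p) = v p"
| "holds v TT = True"
| "holds v FF = False"
| "holds v (Neg a) = (\<not> holds v a)"
| "holds v (Conj a b) = (holds v a \<and> holds v b)"
| "holds v (Disj a b) = (holds v a \<or> holds v b)"

text \<open>Classical consequence from a set of premises (by completeness and compactness
  this coincides with deducibility in classical propositional logic).\<close>
definition entails :: "'p form set \<Rightarrow> 'p form \<Rightarrow> bool" where
  "entails \<Gamma> \<psi> \<longleftrightarrow> (\<forall>v. (\<forall>\<gamma>\<in>\<Gamma>. holds v \<gamma>) \<longrightarrow> holds v \<psi>)"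

definition implies :: "'p form \<Rightarrow> 'p form \<Rightarrow> bool" where
  "implies \<phi> \<psi> \<longleftrightarrow> entails {\<phi>} \<psi>"

definition implies_from :: "'p form set \<Rightarrow> 'p form \<Rightarrow> 'p form \<Rightarrow> bool" where
  "implies_from S \<phi> \<psi> \<longleftrightarrow> entails (insert \<phi> S) \<psi>"

definition is_theory :: "'p form set \<Rightarrow> bool" where
  "is_theory \<T> \<longleftrightarrow> (\<forall>\<psi>. entails \<T> \<psi> \<longrightarrow> \<psi> \<in> \<T>) \<and> FF \<notin> \<T>"

fun big_conj :: "'p form list \<Rightarrow> 'p form" where
  "big_conj [] = TT"
| "big_conj [a] = a"
| "big_conj (a # as) = Conj a (big_conj as)"

type_synonym 'p bet = "'p form \<Rightarrow> real"

definition is_bet :: "'p bet \<Rightarrow> bool" where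
  "is_bet b \<longleftrightarrow> finite {\<phi>. b \<phi> \<noteq> 0} \<and> (\<forall>\<phi>. 0 \<le> b \<phi> \<and> b \<phi> \<le> 1)
     \<and> (\<Sum>\<phi>\<in>{\<phi>. b \<phi> \<noteq> 0}. b \<phi>) = 1"

definition Bets :: "'p bet set" where
  "Bets = {b. is_bet b}"

definition pt :: "'p form \<Rightarrow> 'p bet" where
  "pt \<phi> = (\<lambda>\<chi>. if \<chi> = \<phi> then 1 else 0)"

definition mix :: "real \<Rightarrow> 'p bet \<Rightarrow> 'p bet \<Rightarrow> 'p bet" where
  "mix \<alpha> p q = (\<lambda>\<chi>. \<alpha> * p \<chi> + (1 - \<alpha>) * q \<chi>)"

definition strict :: "('p bet \<Rightarrow> 'p bet \<Rightarrow> bool) \<Rightarrow> 'p bet \<Rightarrow> 'p bet \<Rightarrow> bool" where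
  "strict R p q \<longleftrightarrow> R p q \<and> \<not> R q p"

definition non_triviality :: "('p bet \<Rightarrow> 'p bet \<Rightarrow> bool) \<Rightarrow> bool" where
  "non_triviality R \<longleftrightarrow> (\<forall>\<phi>. R (pt TT) (pt \<phi>) \<and> R (pt \<phi>) (pt FF)) \<and> strict R (pt TT) (pt FF)"

definition objective_EU :: "('p bet \<Rightarrow> 'p bet \<Rightarrow> bool) \<Rightarrow> bool" where
  "objective_EU R \<longleftrightarrow>
     (\<forall>p\<in>Bets. \<forall>q\<in>Bets. R p q \<or> R q p)
   \<and> (\<forall>p\<in>Bets. \<forall>q\<in>Bets. \<forall>r\<in>Bets. R p q \<longrightarrow> R q r \<longrightarrow> R p r)
   \<and> (\<forall>p\<in>Bets. \<forall>q\<in>Bets. \<forall>r\<in>Bets. strict R p q \<longrightarrow> strict R q r \<longrightarrow>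
        (\<exists>\<alpha> \<beta>. 0 < \<alpha> \<and> \<alpha> < 1 \<and> 0 < \<beta> \<and> \<beta> < 1 \<and>
            strict R (mix \<alpha> p r) q \<and> strict R q (mix \<beta> p r)))
   \<and> (\<forall>p\<in>Bets. \<forall>q\<in>Bets. \<forall>r\<in>Bets. \<forall>\<alpha>. 0 < \<alpha> \<longrightarrow> \<alpha> \<le> 1 \<longrightarrow>
        (R p q \<longleftrightarrow> R (mix \<alpha> p r) (mix \<alpha> q r)))"

definition S_implication :: "('p bet \<Rightarrow> 'p bet \<Rightarrow> bool) \<Rightarrow> 'p form set \<Rightarrow> bool" where
  "S_implication R S \<longleftrightarrow> (\<forall>\<phi> \<psi>. implies_from S \<phi> \<psi> \<longrightarrow> R (pt \<psi>) (pt \<phi>))"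

definition conj_of :: "(nat \<Rightarrow> 'p form) \<Rightarrow> nat set \<Rightarrow> 'p form" where
  "conj_of \<phi> I = big_conj (map \<phi> (sorted_list_of_set I))"

definition inclusion_exclusion :: "('p bet \<Rightarrow> 'p bet \<Rightarrow> bool) \<Rightarrow> bool" where
  "inclusion_exclusion R \<longleftrightarrow>
    (\<forall>(n::nat) (\<phi>::nat \<Rightarrow> 'p form) \<psi>. (\<forall>i<n. implies (\<phi> i) \<psi>) \<longrightarrow>
      (let E = {I. I \<subseteq> {0..<n} \<and> I \<noteq> {} \<and> even (card I)};
           Od = {I. I \<subseteq> {0..<n} \<and> I \<noteq> {} \<and> odd (card I)};
           m = real (max (card E + 1) (card Od))
       in R (\<lambda>\<chi>. (1/m) * pt \<psi> \<chi> + (\<Sum>I\<in>E. (1/m) * pt (conj_of \<phi> I) \<chi>)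
                   + (1 - (card E + 1) / m) * pt FF \<chi>)
            (\<lambda>\<chi>. (\<Sum>I\<in>Od. (1/m) * pt (conj_of \<phi> I) \<chi>)
                   + (1 - card Od / m) * pt FF \<chi>)))"

end

theory Submission
  imports Defs
begin

text \<open>If \<open>b(\<psi>) \<succcurlyeq> b(T)\<close>, then \<open>b(\<phi> \<and> \<psi>) \<succcurlyeq> b(\<phi>)\<close> for every \<open>\<phi>\<close>:
  Inclusion/Exclusion for the pair \<open>\<phi>, \<psi>\<close> gives
  \<open>\<onehalf>b(\<phi> \<or> \<psi>) + \<onehalf>b(\<phi> \<and> \<psi>) \<succcurlyeq> \<onehalf>b(\<phi>) + \<onehalf>b(\<psi>)\<close>; replacing \<open>b(\<phi> \<or> \<psi>)\<close>
  by the weakly better \<open>b(\<psi>)\<close> and cancelling \<open>b(\<psi>)\<close> by Independence gives the claim.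
  So if some such \<open>\<psi> \<in> \<T>\<close> were missing from \<open>S\<close>, the consequences of \<open>S \<union> {\<psi>}\<close>
  would still satisfy Implication, because \<open>\<phi> \<Longrightarrow>\<^bsup>S \<union> {\<psi>}\<^esup> \<chi>\<close> means
  \<open>\<phi> \<and> \<psi> \<Longrightarrow>\<^bsup>S\<^esup> \<chi>\<close> and hence \<open>b(\<chi>) \<succcurlyeq> b(\<phi> \<and> \<psi>) \<succcurlyeq> b(\<phi>)\<close>, contradicting
  maximality. Conversely \<open>T \<Longrightarrow>\<^bsup>S\<^esup> \<phi>\<close> for \<open>\<phi> \<in> S\<close>.\<close>

lemma pt_in_Bets: "pt \<phi> \<in> Bets"
proof -
  have "{\<chi>. pt \<phi> \<chi> \<noteq> 0} = {\<phi>}" by (auto simp: pt_def)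
  then show ?thesis by (auto simp: Bets_def is_bet_def pt_def)
qed

lemma bet_sum_superset:
  assumes "is_bet p" "finite U" "{\<phi>. p \<phi> \<noteq> 0} \<subseteq> U"
  shows "(\<Sum>\<phi>\<in>U. p \<phi>) = 1"
proof -
  have "(\<Sum>\<phi>\<in>U. p \<phi>) = (\<Sum>\<phi>\<in>{\<phi>. p \<phi> \<noteq> 0}. p \<phi>)"
    using assms by (intro sum.mono_neutral_right) auto
  then show ?thesis using assms(1) by (simp add: is_bet_def)
qed

lemma mix_in_Bets:
  assumes "p \<in> Bets" "q \<in> Bets" "0 \<le> a" "a \<le> 1"
  shows "mix a p q \<in> Bets"
proof -
  let ?U = "{\<phi>. p \<phi> \<noteq> 0} \<union> {\<phi>. q \<phi> \<noteq> 0}"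
  have p: "is_bet p" and q: "is_bet q" using assms by (auto simp: Bets_def)
  then have U: "finite ?U" by (auto simp: is_bet_def)
  have supp: "{\<phi>. mix a p q \<phi> \<noteq> 0} \<subseteq> ?U" by (auto simp: mix_def)
  have range: "0 \<le> mix a p q \<phi> \<and> mix a p q \<phi> \<le> 1" for \<phi>
  proof -
    have "0 \<le> p \<phi>" "p \<phi> \<le> 1" "0 \<le> q \<phi>" "q \<phi> \<le> 1" using p q by (auto simp: is_bet_def)
    moreover from this have "a * p \<phi> \<le> a" "(1 - a) * q \<phi> \<le> 1 - a"
      using assms(3,4) by (auto intro: mult_left_le)
    ultimately show ?thesis using assms(3,4) by (auto simp: mix_def)
  qed
  have "(\<Sum>\<phi>\<in>{\<phi>. mix a p q \<phi> \<noteq> 0}. mix a p q \<phi>) = (\<Sum>\<phi>\<in>?U. mix a p q \<phi>)"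
    using U supp by (intro sum.mono_neutral_left) auto
  also have "\<dots> = a * (\<Sum>\<phi>\<in>?U. p \<phi>) + (1 - a) * (\<Sum>\<phi>\<in>?U. q \<phi>)"
    by (simp add: mix_def sum.distrib sum_distrib_left)
  also have "\<dots> = 1"
    using bet_sum_superset[OF p U] bet_sum_superset[OF q U] by simp
  finally show ?thesis
    using finite_subset[OF supp U] range by (simp add: Bets_def is_bet_def)
qed

lemma objective_EU_trans:
  assumes "objective_EU R" "p \<in> Bets" "q \<in> Bets" "r \<in> Bets" "R p q" "R q r"
  shows "R p r"
  using assms unfolding objective_EU_def by blast

lemma objective_EU_independence:
  assumes "objective_EU R" "p \<in> Bets" "q \<in> Bets" "r \<in> Bets" "0 < a" "a \<le> 1"
  shows "R p q \<longleftrightarrow> R (mix a p r) (mix a q r)"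
  using assms unfolding objective_EU_def by blast

lemma mix_commute: "mix a p q = mix (1 - a) q p"
  by (auto simp: mix_def)

lemma subset_two_cases: "I \<subseteq> {0..<2::nat} \<longleftrightarrow> I = {} \<or> I = {0} \<or> I = {1} \<or> I = {0, 1}"
proof
  assume "I \<subseteq> {0..<2::nat}"
  then have "I \<subseteq> {0, 1}" by auto
  then show "I = {} \<or> I = {0} \<or> I = {1} \<or> I = {0, 1}"
    by (cases "0 \<in> I"; cases "1 \<in> I") auto
qed auto

lemma inclusion_exclusion_pair:
  assumes "inclusion_exclusion R" "implies \<phi> \<chi>" "implies \<psi> \<chi>"
  shows "R (mix (1/2) (pt \<chi>) (pt (Conj \<phi> \<psi>))) (mix (1/2) (pt \<phi>) (pt \<psi>))"
proof -
  define \<phi>s where "\<phi>s = (\<lambda>i::nat. if i = 0 then \<phi> else \<psi>)"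
  have "\<forall>i<2. implies (\<phi>s i) \<chi>" using assms(2,3) by (simp add: \<phi>s_def)
  then have "let E = {I. I \<subseteq> {0..<2} \<and> I \<noteq> {} \<and> even (card I)};
      Od = {I. I \<subseteq> {0..<2} \<and> I \<noteq> {} \<and> odd (card I)};
      m = real (max (card E + 1) (card Od))
    in R (\<lambda>\<chi>'. (1/m) * pt \<chi> \<chi>' + (\<Sum>I\<in>E. (1/m) * pt (conj_of \<phi>s I) \<chi>')
            + (1 - (card E + 1) / m) * pt FF \<chi>')
         (\<lambda>\<chi>'. (\<Sum>I\<in>Od. (1/m) * pt (conj_of \<phi>s I) \<chi>') + (1 - card Od / m) * pt FF \<chi>')"
    using assms(1) unfolding inclusion_exclusion_def by blast
  moreover have "{I. I \<subseteq> {0..<2} \<and> I \<noteq> {} \<and> even (card I)} = {{0, 1::nat}}"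
    and "{I. I \<subseteq> {0..<2} \<and> I \<noteq> {} \<and> odd (card I)} = {{0}, {1::nat}}"
    by (auto simp: subset_two_cases)
  moreover have "conj_of \<phi>s {0, 1} = Conj \<phi> \<psi>" "conj_of \<phi>s {0} = \<phi>" "conj_of \<phi>s {1} = \<psi>"
    by (simp_all add: conj_of_def \<phi>s_def)
  ultimately show ?thesis by (simp add: Let_def mix_def)
qed

lemma conj_with_certain_pref:
  assumes NT: "non_triviality R" and EU: "objective_EU R" and IE: "inclusion_exclusion R"
    and certain: "R (pt \<psi>) (pt TT)"
  shows "R (pt (Conj \<phi> \<psi>)) (pt \<phi>)"
proof -
  let ?mix = "\<lambda>p q. mix (1/2) (pt p) (pt q)"
  have bets: "?mix p q \<in> Bets" for p q by (simp add: mix_in_Bets pt_in_Bets)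
  note indep = objective_EU_independence[where a = "1/2", OF EU pt_in_Bets pt_in_Bets pt_in_Bets]
  have "R (pt TT) (pt (Disj \<phi> \<psi>))" using NT by (simp add: non_triviality_def)
  then have "R (pt \<psi>) (pt (Disj \<phi> \<psi>))"
    using objective_EU_trans[OF EU pt_in_Bets pt_in_Bets pt_in_Bets certain] by blast
  then have "R (?mix \<psi> (Conj \<phi> \<psi>)) (?mix (Disj \<phi> \<psi>) (Conj \<phi> \<psi>))"
    using indep by simp
  moreover have "R (?mix (Disj \<phi> \<psi>) (Conj \<phi> \<psi>)) (?mix \<phi> \<psi>)"
    using inclusion_exclusion_pair[OF IE] by (simp add: implies_def entails_def)
  ultimately have "R (?mix \<psi> (Conj \<phi> \<psi>)) (?mix \<psi> \<phi>)"
    using objective_EU_trans[OF EU bets bets bets] mix_commute[of "1/2" "pt \<phi>"] by fastforce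
  then show ?thesis
    using indep mix_commute[of "1/2" "pt \<psi>"] by simp
qed

lemma S_implication_member_pref:
  assumes "S_implication R S" "\<phi> \<in> S"
  shows "R (pt \<phi>) (pt TT)"
proof -
  have "implies_from S TT \<phi>" using assms(2) by (auto simp: implies_from_def entails_def)
  then show ?thesis using assms(1) by (simp add: S_implication_def)
qed

lemma S_implication_insert_certain:
  assumes "non_triviality R" "objective_EU R" "inclusion_exclusion R"
    and "S_implication R S" and "R (pt \<psi>) (pt TT)"
  shows "S_implication R {\<chi>. entails (insert \<psi> S) \<chi>}"
  unfolding S_implication_def
proof (intro allI impI)
  fix \<phi> \<chi> assume "implies_from {\<chi>. entails (insert \<psi> S) \<chi>} \<phi> \<chi>"
  then have "implies_from S (Conj \<phi> \<psi>) \<chi>" by (auto simp: implies_from_def entails_def)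
  then have "R (pt \<chi>) (pt (Conj \<phi> \<psi>))" using assms(4) by (simp add: S_implication_def)
  moreover have "R (pt (Conj \<phi> \<psi>)) (pt \<phi>)" using conj_with_certain_pref assms(1-3,5) .
  ultimately show "R (pt \<chi>) (pt \<phi>)"
    using objective_EU_trans[OF assms(2) pt_in_Bets pt_in_Bets pt_in_Bets] by blast
qed

theorem proposition6:
  fixes R :: "'p bet \<Rightarrow> 'p bet \<Rightarrow> bool" and \<T> S :: "'p form set"
  assumes "non_triviality R" and "objective_EU R" and "inclusion_exclusion R"
    and "is_theory \<T>"
    and "is_theory S" and "S \<subseteq> \<T>"
    and "S_implication R S"
    and "\<forall>S'. S \<subset> S' \<and> S' \<subseteq> \<T> \<longrightarrow> \<not> S_implication R S'"
  shows "S = {\<phi> \<in> \<T>. R (pt \<phi>) (pt TT)}"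
proof
  show "S \<subseteq> {\<phi> \<in> \<T>. R (pt \<phi>) (pt TT)}"
    using assms(6,7) S_implication_member_pref by blast
next
  show "{\<phi> \<in> \<T>. R (pt \<phi>) (pt TT)} \<subseteq> S"
  proof (rule ccontr)
    assume "\<not> ?thesis"
    then obtain \<psi> where \<psi>: "\<psi> \<in> \<T>" "R (pt \<psi>) (pt TT)" "\<psi> \<notin> S" by auto
    define S' where "S' = {\<chi>. entails (insert \<psi> S) \<chi>}"
    have "S \<subset> S'" using \<psi>(3) by (auto simp: S'_def entails_def)
    moreover have "S' \<subseteq> \<T>"
    proof
      fix \<chi> assume "\<chi> \<in> S'"
      then have "entails \<T> \<chi>" using assms(6) \<psi>(1) by (auto simp: S'_def entails_def)
      then show "\<chi> \<in> \<T>" using assms(4) by (simp add: is_theory_def)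
    qed
    moreover have "S_implication R S'"
      unfolding S'_def using S_implication_insert_certain assms(1-3,7) \<psi>(2) .
    ultimately show False using assms(8) by blast
  qed
qed

end
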